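(* Let $I$ be a composition of $n$ with valley set $V$, and let $Cl_V\subseteq Cl_n$ be the subalgebra generated by $(c_v)_{v\in V}$. For $c\in Cl_V$ define $f_c:M_I\to M_I$ by $f_c(x\epsilon_I)=xc\,\epsilon_I$ for all $x\in Cl_n$. Then each $f_c$ is a well-defined endomorphism of $M_I$ as an $HCl_n(0)$-module, $c\mapsto f_c$ defines a right action of $Cl_V$ on $M_I$ (that is, $f_{cc'}=f_{c'}\circ f_c$) commuting with the left $HCl_n(0)$-action, and $c\mapsto f_c$ is a bijective, $\mathbb{Z}/2$-grading-preserving map from $Cl_V$ onto $\operatorname{End}_{HCl_n(0)}(M_I)$. In other words, it is a grading-preserving anti-isomorphism of algebras, which the paper describes as a graded isomorphism.
   Context: For a composition $I=(i_1,\dots,i_r)$ of $n$, $\operatorname{Des}(I)=\{i_1,\dots,i_1+\cdots+i_{r-1}\}\subseteq[1,n-1]$. A valley of $I$ is $k\in\{1,\dots,n\}$ with $k\notin\operatorname{Des}(I)$ and (either $k=1$ or $k-1\in\operatorname{Des}(I)$). $Cl_n$ is the complex Clifford algebra on $c_1,\dots,c_n$ with $c_ic_j=-c_jc_i$ ($i\ne j$) and $c_i^2=-1$. $HCl_n(0)$ is the complex algebra generated by $T_1,\dots,T_{n-1}$ and $c_1,\dots,c_n$ with the Clifford relations, $T_i^2=-T_i$, $T_iT_j=T_jT_i$ ($|i-j|>1$), $T_iT_{i+1}T_i=T_{i+1}T_iT_{i+1}$, $T_ic_j=c_jT_i$ ($j\ne i,i+1$), $T_ic_i=c_{i+1}T_i$,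 and $(T_i+1)c_{i+1}=c_i(T_i+1)$. It is $\mathbb{Z}/2$-graded with $T_i$ even and $c_j$ odd. $H_n(0)$ is the subalgebra generated by the $T_i$. $S_I=\mathbb{C}\epsilon_I$ is the $H_n(0)$-module with $T_j\epsilon_I=-\epsilon_I$ if $j\in\operatorname{Des}(I)$ and $T_j\epsilon_I=0$ otherwise, and $M_I=HCl_n(0)\otimes_{H_n(0)}S_I$. $M_I$ is a free $Cl_n$-module of rank one generated by $\epsilon_I$, with basis $c_D\epsilon_I$ for $D\subseteq\{1,\dots,n\}$ (where $c_D=c_{d_1}\cdots c_{d_k}$ for $D=\{d_1<\dots<d_k\}$), graded by the parity of $|D|$. *)

theory Defs
  imports "HOL-Analysis.Analysis"
begin

definition is_composition :: "nat list \<Rightarrow> nat \<Rightarrow> bool" where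
  "is_composition I n \<longleftrightarrow> (\<forall>i\<in>set I. 0 < i) \<and> sum_list I = n"

definition Des :: "nat list \<Rightarrow> nat set" where
  "Des I = {sum_list (take k I) | k. 1 \<le> k \<and> k < length I}"

definition valleys :: "nat list \<Rightarrow> nat \<Rightarrow> nat set" where
  "valleys I n = {k \<in> {1..n}. k \<notin> Des I \<and> (k = 1 \<or> k - 1 \<in> Des I)}"

text \<open>Elements of Cl_n are written in the basis c_D (D a subset of {1..n}) as
  coefficient functions x :: nat set => complex supported on subsets of {1..n}.
  The product of basis elements is c_D c_E = (-1)^(inv(D,E) + |D \<inter> E|) c_(D sym-diff E),
  which is the multiplication of the algebra generated by c_1..c_n subject to
  c_i c_j = - c_j c_i (i \<noteq> j) and c_i^2 = -1.\<close>

definition clifford :: "nat \<Rightarrow> (nat set \<Rightarrow> complex) set" where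
  "clifford n = {x. \<forall>D. x D \<noteq> 0 \<longrightarrow> D \<subseteq> {1..n}}"

definition symdiff :: "nat set \<Rightarrow> nat set \<Rightarrow> nat set" where
  "symdiff D E = (D - E) \<union> (E - D)"

definition clsign :: "nat set \<Rightarrow> nat set \<Rightarrow> complex" where
  "clsign D E = (-1) ^ (card {(a, b). a \<in> D \<and> b \<in> E \<and> b < a} + card (D \<inter> E))"

definition clmul :: "nat \<Rightarrow> (nat set \<Rightarrow> complex) \<Rightarrow> (nat set \<Rightarrow> complex) \<Rightarrow> (nat set \<Rightarrow> complex)" where
  "clmul n x y = (\<lambda>E. \<Sum>D\<in>Pow {1..n}. x D * y (symdiff D E) * clsign D (symdiff D E))"

definition clone :: "nat set \<Rightarrow> complex" where
  "clone = (\<lambda>D. if D = {} then 1 else 0)"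

definition clgen :: "nat \<Rightarrow> nat set \<Rightarrow> complex" where
  "clgen i = (\<lambda>D. if D = {i} then 1 else 0)"

definition cladd :: "(nat set \<Rightarrow> complex) \<Rightarrow> (nat set \<Rightarrow> complex) \<Rightarrow> (nat set \<Rightarrow> complex)" where
  "cladd x y = (\<lambda>D. x D + y D)"

definition clscale :: "complex \<Rightarrow> (nat set \<Rightarrow> complex) \<Rightarrow> (nat set \<Rightarrow> complex)" where
  "clscale a x = (\<lambda>D. a * x D)"

inductive_set clsub :: "nat \<Rightarrow> nat set \<Rightarrow> (nat set \<Rightarrow> complex) set" for n V where
  one: "clone \<in> clsub n V"
| gen: "v \<in> V \<Longrightarrow> clgen v \<in> clsub n V"
| add: "x \<in> clsub n V \<Longrightarrow> y \<in> clsub n V \<Longrightarrow> cladd x y \<in> clsub n V"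
| scale: "x \<in> clsub n V \<Longrightarrow> clscale a x \<in> clsub n V"
| mul: "x \<in> clsub n V \<Longrightarrow> y \<in> clsub n V \<Longrightarrow> clmul n x y \<in> clsub n V"

definition cl_even :: "(nat set \<Rightarrow> complex) \<Rightarrow> bool" where
  "cl_even x \<longleftrightarrow> (\<forall>D. x D \<noteq> 0 \<longrightarrow> even (card D))"

definition cl_odd :: "(nat set \<Rightarrow> complex) \<Rightarrow> bool" where
  "cl_odd x \<longleftrightarrow> (\<forall>D. x D \<noteq> 0 \<longrightarrow> odd (card D))"

text \<open>A left HCl_n(0)-module structure on the complex vector space ('m, sc) is given
  by linear operators C j (action of c_j, 1 \<le> j \<le> n) and T i (action of T_i,
  1 \<le> i \<le> n-1) satisfying the defining relations of HCl_n(0).\<close>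
definition hcl_module :: "nat \<Rightarrow> (complex \<Rightarrow> 'm::ab_group_add \<Rightarrow> 'm) \<Rightarrow>
    (nat \<Rightarrow> 'm \<Rightarrow> 'm) \<Rightarrow> (nat \<Rightarrow> 'm \<Rightarrow> 'm) \<Rightarrow> bool" where
  "hcl_module n sc C T \<longleftrightarrow>
     vector_space sc \<and>
     (\<forall>j\<in>{1..n}. Vector_Spaces.linear sc sc (C j)) \<and>
     (\<forall>i\<in>{1..<n}. Vector_Spaces.linear sc sc (T i)) \<and>
     (\<forall>i\<in>{1..n}. \<forall>j\<in>{1..n}. i \<noteq> j \<longrightarrow> (\<forall>m. C i (C j m) = - C j (C i m))) \<and>
     (\<forall>i\<in>{1..n}. \<forall>m. C i (C i m) = - m) \<and>
     (\<forall>i\<in>{1..<n}. \<forall>m. T i (T i m) = - T i m) \<and>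
     (\<forall>i\<in>{1..<n}. \<forall>j\<in>{1..<n}. (i + 1 < j \<or> j + 1 < i) \<longrightarrow> (\<forall>m. T i (T j m) = T j (T i m))) \<and>
     (\<forall>i. 1 \<le> i \<and> i + 1 < n \<longrightarrow> (\<forall>m. T i (T (i+1) (T i m)) = T (i+1) (T i (T (i+1) m)))) \<and>
     (\<forall>i\<in>{1..<n}. \<forall>j\<in>{1..n}. j \<noteq> i \<and> j \<noteq> i + 1 \<longrightarrow> (\<forall>m. T i (C j m) = C j (T i m))) \<and>
     (\<forall>i\<in>{1..<n}. \<forall>m. T i (C i m) = C (i+1) (T i m)) \<and>
     (\<forall>i\<in>{1..<n}. \<forall>m. T i (C (i+1) m) + C (i+1) m = C i (T i m) + C i m)"

text \<open>c_D acting on m, with c_D = c_(d1) ... c_(dk) for D = {d1 < ... < dk}.\<close>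
definition cmon :: "(nat \<Rightarrow> 'm \<Rightarrow> 'm) \<Rightarrow> nat set \<Rightarrow> 'm \<Rightarrow> 'm" where
  "cmon C D m = foldr C (sorted_list_of_set D) m"

definition clact :: "nat \<Rightarrow> (complex \<Rightarrow> 'm::ab_group_add \<Rightarrow> 'm) \<Rightarrow> (nat \<Rightarrow> 'm \<Rightarrow> 'm) \<Rightarrow>
    (nat set \<Rightarrow> complex) \<Rightarrow> 'm \<Rightarrow> 'm" where
  "clact n sc C x m = (\<Sum>D\<in>Pow {1..n}. sc (x D) (cmon C D m))"

text \<open>(sc, C, T, eps) is (a copy of) M_I = HCl_n(0) \<otimes>_{H_n(0)} S_I: an HCl_n(0)-module
  with an element eps spanning a copy of S_I (T_j eps = -eps for j \<in> Des I, 0 otherwise)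
  such that the c_D eps, D \<subseteq> {1..n}, form a basis. By the universal property of the
  induced module and the freeness of M_I over Cl_n, such data is exactly M_I up to
  isomorphism of HCl_n(0)-modules (eps corresponding to 1 \<otimes> epsilon_I).\<close>
definition is_MI :: "nat \<Rightarrow> nat list \<Rightarrow> (complex \<Rightarrow> 'm::ab_group_add \<Rightarrow> 'm) \<Rightarrow>
    (nat \<Rightarrow> 'm \<Rightarrow> 'm) \<Rightarrow> (nat \<Rightarrow> 'm \<Rightarrow> 'm) \<Rightarrow> 'm \<Rightarrow> bool" where
  "is_MI n I sc C T eps \<longleftrightarrow>
     hcl_module n sc C T \<and>
     (\<forall>j\<in>{1..<n}. T j eps = (if j \<in> Des I then - eps else 0)) \<and>
     inj_on (\<lambda>D. cmon C D eps) (Pow {1..n}) \<and>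
     \<not> module.dependent sc ((\<lambda>D. cmon C D eps) ` Pow {1..n}) \<and>
     module.span sc ((\<lambda>D. cmon C D eps) ` Pow {1..n}) = UNIV"

definition hcl_endos :: "nat \<Rightarrow> (complex \<Rightarrow> 'm::ab_group_add \<Rightarrow> 'm) \<Rightarrow>
    (nat \<Rightarrow> 'm \<Rightarrow> 'm) \<Rightarrow> (nat \<Rightarrow> 'm \<Rightarrow> 'm) \<Rightarrow> ('m \<Rightarrow> 'm) set" where
  "hcl_endos n sc C T = {f. Vector_Spaces.linear sc sc f \<and>
      (\<forall>j\<in>{1..n}. \<forall>m. f (C j m) = C j (f m)) \<and>
      (\<forall>i\<in>{1..<n}. \<forall>m. f (T i m) = T i (f m))}"

definition M_even :: "nat \<Rightarrow> (complex \<Rightarrow> 'm::ab_group_add \<Rightarrow> 'm) \<Rightarrow> (nat \<Rightarrow> 'm \<Rightarrow> 'm) \<Rightarrow> 'm \<Rightarrow> 'm set" where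
  "M_even n sc C eps = module.span sc ((\<lambda>D. cmon C D eps) ` {D\<in>Pow {1..n}. even (card D)})"

definition M_odd :: "nat \<Rightarrow> (complex \<Rightarrow> 'm::ab_group_add \<Rightarrow> 'm) \<Rightarrow> (nat \<Rightarrow> 'm \<Rightarrow> 'm) \<Rightarrow> 'm \<Rightarrow> 'm set" where
  "M_odd n sc C eps = module.span sc ((\<lambda>D. cmon C D eps) ` {D\<in>Pow {1..n}. odd (card D)})"

definition endo_even :: "nat \<Rightarrow> (complex \<Rightarrow> 'm::ab_group_add \<Rightarrow> 'm) \<Rightarrow> (nat \<Rightarrow> 'm \<Rightarrow> 'm) \<Rightarrow> 'm \<Rightarrow> ('m \<Rightarrow> 'm) \<Rightarrow> bool" where
  "endo_even n sc C eps f \<longleftrightarrow> f ` M_even n sc C eps \<subseteq> M_even n sc C eps \<and> f ` M_odd n sc C eps \<subseteq> M_odd n sc C eps"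

definition endo_odd :: "nat \<Rightarrow> (complex \<Rightarrow> 'm::ab_group_add \<Rightarrow> 'm) \<Rightarrow> (nat \<Rightarrow> 'm \<Rightarrow> 'm) \<Rightarrow> 'm \<Rightarrow> ('m \<Rightarrow> 'm) \<Rightarrow> bool" where
  "endo_odd n sc C eps f \<longleftrightarrow> f ` M_even n sc C eps \<subseteq> M_odd n sc C eps \<and> f ` M_odd n sc C eps \<subseteq> M_even n sc C eps"

end

theory Submission
  imports Defs
begin

(*
  M_I is free of rank one over Cl_n on eps, so the Cl_n-linear endomorphisms of M_I are
  exactly the right multiplications f_y : x eps |-> x y eps, y in Cl_n.  Such an f_y also
  commutes with T_i iff y eps, like eps, is an eigenvector of T_i for the eigenvalue -1
  (i in Des I) or 0 (otherwise).  T_i preserves the four-dimensional blocks spanned by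
  c_D eps, c_i c_D eps, c_(i+1) c_D eps, c_i c_(i+1) c_D eps (i, i+1 not in D), and an
  explicit computation on these blocks shows that the eigenvector condition says: no D in
  the support of y contains i (if i in Des I), resp. i+1 (otherwise).  Over all i this
  means that y is supported on sets of valleys, i.e. y is in Cl_V.  Finally f_y shifts the
  parity of c_D eps by the parity of the support of y.
*)

section \<open>Symmetric differences and Clifford signs\<close>

lemma symdiff_cancel [simp]: "symdiff D (symdiff D E) = E"
  by (auto simp: symdiff_def)

lemma symdiff_empty [simp]: "symdiff A {} = A" "symdiff {} A = A"
  by (auto simp: symdiff_def)

lemma symdiff_assoc: "symdiff (symdiff A B) E = symdiff A (symdiff B E)"
  by (auto simp: symdiff_def)

lemma symdiff_singleton: "d \<notin> X \<Longrightarrow> symdiff {d} X = insert d X"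
  by (auto simp: symdiff_def)

lemma symdiff_singleton_insert: "d \<notin> X \<Longrightarrow> symdiff {d} (insert d X) = X"
  by (auto simp: symdiff_def)

lemma symdiff_subset: "D \<subseteq> A \<Longrightarrow> E \<subseteq> A \<Longrightarrow> symdiff D E \<subseteq> A"
  by (auto simp: symdiff_def)

lemma finite_symdiff [simp]: "finite A \<Longrightarrow> finite B \<Longrightarrow> finite (symdiff A B)"
  by (simp add: symdiff_def)

lemma card_symdiff:
  assumes "finite A" "finite B"
  shows "card (symdiff A B) + 2 * card (A \<inter> B) = card A + card B"
proof -
  have "card (symdiff A B) = card (A - B) + card (B - A)"
    unfolding symdiff_def using assms by (intro card_Un_disjoint) auto
  moreover have "card A = card (A - B) + card (A \<inter> B)" "card B = card (B - A) + card (A \<inter> B)"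
    using assms by (metis Int_commute add.commute card_Int_Diff)+
  ultimately show ?thesis by simp
qed

lemma even_card_symdiff:
  assumes "finite A" "finite B"
  shows "even (card (symdiff A B)) \<longleftrightarrow> (even (card A) \<longleftrightarrow> even (card B))"
proof -
  have "even (card (symdiff A B)) \<longleftrightarrow> even (card A + card B)"
    using card_symdiff[OF assms] by (metis even_add even_mult_iff even_numeral)
  then show ?thesis by simp
qed

lemma prod_symdiff:
  fixes f :: "nat \<Rightarrow> 'b::comm_monoid_mult"
  assumes "finite A" "finite B" "\<And>x. f x * f x = 1"
  shows "prod f (symdiff A B) = prod f A * prod f B"
proof -
  have "prod f A * prod f B =
      (prod f (A - B) * prod f (B - A)) * (prod f (A \<inter> B) * prod f (A \<inter> B))"
    using assms(1,2) prod.Int_Diff[of A f B] prod.Int_Diff[of B f A]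
    by (simp add: Int_commute mult_ac)
  also have "prod f (A \<inter> B) * prod f (A \<inter> B) = 1"
    by (simp add: prod.distrib[symmetric] assms(3))
  also have "prod f (A - B) * prod f (B - A) = prod f (symdiff A B)"
    unfolding symdiff_def using assms by (intro prod.union_disjoint[symmetric]) auto
  finally show ?thesis by simp
qed

lemma sum_Pow_insert:
  fixes g :: "'a set \<Rightarrow> 'b::comm_monoid_add"
  assumes "finite S" "a \<notin> S"
  shows "(\<Sum>D\<in>Pow (insert a S). g D) = (\<Sum>D\<in>Pow S. g D + g (insert a D))"
proof -
  have inj: "inj_on (insert a) (Pow S)" using assms(2) by (auto simp: inj_on_def)
  have "(\<Sum>D\<in>Pow (insert a S). g D) = (\<Sum>D\<in>Pow S. g D) + (\<Sum>D\<in>insert a ` Pow S. g D)"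
    unfolding Pow_insert using assms by (intro sum.union_disjoint) auto
  also have "(\<Sum>D\<in>insert a ` Pow S. g D) = (\<Sum>D\<in>Pow S. g (insert a D))"
    by (rule sum.reindex[OF inj, unfolded o_def])
  finally show ?thesis by (simp add: sum.distrib)
qed

lemma sum_Pow_insert_insert:
  fixes g :: "'a set \<Rightarrow> 'b::comm_monoid_add"
  assumes "finite S" "a \<notin> S" "b \<notin> S" "a \<noteq> b"
  shows "(\<Sum>D\<in>Pow (insert a (insert b S)). g D) =
    (\<Sum>D\<in>Pow S. (g D + g (insert a D)) + (g (insert b D) + g (insert a (insert b D))))"
  using assms by (simp add: sum_Pow_insert)

definition pair_sign :: "nat \<Rightarrow> nat \<Rightarrow> complex" where
  "pair_sign a b = (if b \<le> a then -1 else 1)"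

lemma pair_sign_sq [simp]: "pair_sign a b * pair_sign a b = 1"
  by (simp add: pair_sign_def)

lemma clsign_eq_prod:
  assumes "finite D" "finite E"
  shows "clsign D E = (\<Prod>a\<in>D. \<Prod>b\<in>E. pair_sign a b)"
proof -
  have "(\<Prod>a\<in>D. \<Prod>b\<in>E. pair_sign a b) = (\<Prod>a\<in>D. \<Prod>b\<in>E. (-1::complex) ^ (if b \<le> a then 1 else 0))"
    by (intro prod.cong refl) (simp add: pair_sign_def)
  also have "\<dots> = (-1) ^ (\<Sum>a\<in>D. \<Sum>b\<in>E. (if b \<le> a then 1 else 0))"
    by (simp add: power_sum)
  also have "(\<Sum>a\<in>D. \<Sum>b\<in>E. (if b \<le> a then 1 else 0)) = (\<Sum>a\<in>D. card {b\<in>E. b \<le> a})"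
    using assms by (simp add: sum.If_cases Int_def)
  also have "\<dots> = card (Sigma D (\<lambda>a. {b\<in>E. b \<le> a}))"
    using assms by (simp add: card_SigmaI)
  also have "Sigma D (\<lambda>a. {b\<in>E. b \<le> a}) = {(a, b). a \<in> D \<and> b \<in> E \<and> b < a} \<union> (\<lambda>x. (x,x)) ` (D \<inter> E)"
    by auto
  also have "card \<dots> = card {(a, b). a \<in> D \<and> b \<in> E \<and> b < a} + card ((\<lambda>x. (x,x)) ` (D \<inter> E))"
    by (rule card_Un_disjoint) (auto intro: finite_subset[of _ "D \<times> E"] simp: assms)
  also have "card ((\<lambda>x. (x,x)) ` (D \<inter> E)) = card (D \<inter> E)"
    by (rule card_image) (auto simp: inj_on_def)
  finally show ?thesis by (simp add: clsign_def)
qed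

lemma clsign_symdiff_left:
  "finite A \<Longrightarrow> finite A' \<Longrightarrow> finite B \<Longrightarrow> clsign (symdiff A A') B = clsign A B * clsign A' B"
  by (simp add: clsign_eq_prod prod_symdiff prod.distrib[symmetric])

lemma clsign_symdiff_right:
  "finite A \<Longrightarrow> finite B \<Longrightarrow> finite B' \<Longrightarrow> clsign A (symdiff B B') = clsign A B * clsign A B'"
  by (simp add: clsign_eq_prod prod_symdiff prod.distrib[symmetric])

lemma clsign_less:
  assumes "finite A" "finite B" "\<forall>a\<in>A. \<forall>b\<in>B. a < b"
  shows "clsign A B = 1"
  using assms by (auto simp: clsign_eq_prod pair_sign_def not_le intro!: prod.neutral)

lemma clsign_singleton_insert:
  "finite X \<Longrightarrow> d \<notin> X \<Longrightarrow> clsign {j} (insert d X) = pair_sign j d * clsign {j} X"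
  by (simp add: clsign_eq_prod)

definition clbasis :: "nat set \<Rightarrow> nat set \<Rightarrow> complex" where
  "clbasis D = (\<lambda>E. if E = D then 1 else 0)"

lemma clone_eq_clbasis: "clone = clbasis {}"
  by (simp add: clone_def clbasis_def fun_eq_iff)

lemma clgen_eq_clbasis: "clgen j = clbasis {j}"
  by (simp add: clgen_def clbasis_def fun_eq_iff)

lemma clbasis_in_clifford: "D \<subseteq> {1..n} \<Longrightarrow> clbasis D \<in> clifford n"
  by (simp add: clifford_def clbasis_def)

lemma cladd_in_clifford: "x \<in> clifford n \<Longrightarrow> y \<in> clifford n \<Longrightarrow> cladd x y \<in> clifford n"
  unfolding clifford_def cladd_def
proof (intro CollectI allI impI)
  fix D assume "x \<in> {x. \<forall>D. x D \<noteq> 0 \<longrightarrow> D \<subseteq> {1..n}}" "y \<in> {x. \<forall>D. x D \<noteq> 0 \<longrightarrow> D \<subseteq> {1..n}}"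
    "x D + y D \<noteq> 0"
  then show "D \<subseteq> {1..n}" by (cases "x D = 0") auto
qed

lemma clscale_in_clifford: "x \<in> clifford n \<Longrightarrow> clscale a x \<in> clifford n"
  by (auto simp: clifford_def clscale_def)

lemma clmul_in_clifford:
  assumes "y \<in> clifford n"
  shows "clmul n x y \<in> clifford n"
  unfolding clifford_def
proof (intro CollectI allI impI)
  fix E assume "clmul n x y E \<noteq> 0"
  then obtain D where D: "D \<in> Pow {1..n}" "x D * y (symdiff D E) * clsign D (symdiff D E) \<noteq> 0"
    unfolding clmul_def by (rule sum.not_neutral_contains_not_neutral)
  then have "symdiff D E \<subseteq> {1..n}" using assms by (simp add: clifford_def)
  with D(1) have "symdiff D (symdiff D E) \<subseteq> {1..n}" by (simp only: PowD symdiff_subset)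
  then show "E \<subseteq> {1..n}" by simp
qed

lemma clmul_clbasis_left:
  assumes "D \<subseteq> {1..n}"
  shows "clmul n (clbasis D) c E = c (symdiff D E) * clsign D (symdiff D E)"
proof -
  have "clmul n (clbasis D) c E =
      (\<Sum>D'\<in>Pow {1..n}. if D' = D then c (symdiff D E) * clsign D (symdiff D E) else 0)"
    unfolding clmul_def clbasis_def by (intro sum.cong refl) auto
  then show ?thesis using assms by (simp add: sum.delta)
qed

lemma clmul_clgen_clbasis:
  assumes "d \<in> {1..n}" "finite X" "\<forall>x\<in>X. d < x"
  shows "clmul n (clgen d) (clbasis X) = clbasis (insert d X)"
proof
  fix E
  have dX: "d \<notin> X" using assms(3) by auto
  have "clmul n (clgen d) (clbasis X) E = clbasis X (symdiff {d} E) * clsign {d} (symdiff {d} E)"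
    using assms(1) by (simp add: clgen_eq_clbasis clmul_clbasis_left)
  also have "\<dots> = clbasis (insert d X) E"
  proof (cases "E = insert d X")
    case True
    moreover have "clsign {d} X = 1" using assms by (intro clsign_less) auto
    ultimately show ?thesis using dX by (simp add: clbasis_def symdiff_singleton_insert)
  next
    case False
    have "symdiff {d} E \<noteq> X"
    proof
      assume "symdiff {d} E = X"
      then have "symdiff {d} (symdiff {d} E) = insert d X" using dX by (simp add: symdiff_singleton)
      then show False using False by simp
    qed
    then show ?thesis using False by (simp add: clbasis_def)
  qed
  finally show "clmul n (clgen d) (clbasis X) E = clbasis (insert d X) E" .
qed

lemma clsub_supported: "x \<in> clsub n V \<Longrightarrow> x E \<noteq> 0 \<Longrightarrow> E \<subseteq> V"
proof (induction arbitrary: E rule: clsub.induct)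
  case one
  then show ?case by (simp add: clone_def split: if_splits)
next
  case (gen v)
  then show ?case by (simp add: clgen_def split: if_splits)
next
  case (add x y)
  then show ?case by (cases "x E = 0") (auto simp: cladd_def)
next
  case (scale x a)
  then show ?case by (simp add: clscale_def)
next
  case (mul x y)
  from mul.prems obtain D where "x D * y (symdiff D E) * clsign D (symdiff D E) \<noteq> 0"
    unfolding clmul_def by (rule sum.not_neutral_contains_not_neutral)
  then have "D \<subseteq> V" "symdiff D E \<subseteq> V" using mul.IH by auto
  then have "symdiff D (symdiff D E) \<subseteq> V" by (rule symdiff_subset)
  then show ?case by simp
qed

lemma clbasis_in_clsub:
  assumes "V \<subseteq> {1..n}" "D \<subseteq> V"
  shows "clbasis D \<in> clsub n V"
proof -
  have "finite D" using assms by (auto intro: finite_subset[OF _ finite_atLeastAtMost])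
  then show ?thesis using assms(2)
  proof (induction D rule: finite_linorder_min_induct)
    case empty
    show ?case unfolding clone_eq_clbasis[symmetric] by (rule clsub.one)
  next
    case (insert d X)
    then have "clmul n (clgen d) (clbasis X) \<in> clsub n V"
      by (intro clsub.mul clsub.gen) auto
    moreover have "d \<in> {1..n}" using insert.prems assms(1) by auto
    ultimately show ?case using insert.hyps by (simp add: clmul_clgen_clbasis)
  qed
qed

lemma supported_in_clsub:
  assumes V: "V \<subseteq> {1..n}" and x: "\<And>D. x D \<noteq> 0 \<Longrightarrow> D \<subseteq> V"
  shows "x \<in> clsub n V"
proof -
  have sum_in_clsub: "(\<lambda>E. if E \<in> A then x E else 0) \<in> clsub n V" if "finite A" "A \<subseteq> Pow V" for A
    using that
  proof (induction A rule: finite_induct)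
    case empty
    have "(\<lambda>E. if E \<in> {} then x E else 0) = clscale 0 clone" by (simp add: clscale_def fun_eq_iff)
    then show ?case by (simp add: clsub.one clsub.scale)
  next
    case (insert a A)
    have "(\<lambda>E. if E \<in> insert a A then x E else 0) =
        cladd (clscale (x a) (clbasis a)) (\<lambda>E. if E \<in> A then x E else 0)"
      using insert.hyps by (auto simp: cladd_def clscale_def clbasis_def fun_eq_iff)
    moreover have "clbasis a \<in> clsub n V" using insert.prems V by (intro clbasis_in_clsub) auto
    ultimately show ?case using insert by (simp add: clsub.add clsub.scale)
  qed
  have "finite (Pow V)" using V by (auto intro: finite_subset[OF _ finite_atLeastAtMost])
  moreover have "(\<lambda>E. if E \<in> Pow V then x E else 0) = x" using x by (auto simp: fun_eq_iff)
  ultimately show ?thesis using sum_in_clsub[of "Pow V"] by simp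
qed

lemma clsub_eq_supported:
  assumes "V \<subseteq> {1..n}"
  shows "clsub n V = {x. \<forall>D. x D \<noteq> 0 \<longrightarrow> D \<subseteq> V}"
proof (intro set_eqI iffI)
  fix x assume "x \<in> clsub n V"
  then show "x \<in> {x. \<forall>D. x D \<noteq> 0 \<longrightarrow> D \<subseteq> V}" by (auto dest: clsub_supported)
next
  fix x :: "nat set \<Rightarrow> complex" assume "x \<in> {x. \<forall>D. x D \<noteq> 0 \<longrightarrow> D \<subseteq> V}"
  then show "x \<in> clsub n V" using assms by (intro supported_in_clsub) auto
qed

lemma clsub_subset_clifford: "V \<subseteq> {1..n} \<Longrightarrow> clsub n V \<subseteq> clifford n"
  unfolding clifford_def by (blast dest: clsub_supported)

lemma Des_subset:
  assumes "is_composition I n"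
  shows "Des I \<subseteq> {1..<n}"
proof
  fix k assume "k \<in> Des I"
  then obtain j where j: "k = sum_list (take j I)" "1 \<le> j" "j < length I"
    unfolding Des_def by auto
  have pos: "\<forall>x\<in>set I. 0 < x" and sum: "sum_list I = n"
    using assms by (auto simp: is_composition_def)
  have "take j I = I ! 0 # take (j - 1) (drop 1 I)"
    using j by (cases I; cases j) auto
  moreover have "I ! 0 \<in> set I" using j(3) by (intro nth_mem) linarith
  then have "0 < I ! 0" using pos by blast
  moreover have "drop j I = I ! j # drop (Suc j) I" using j by (simp add: Cons_nth_drop_Suc)
  moreover have "0 < I ! j" using pos j by (simp add: nth_mem)
  moreover have "sum_list (take j I) + sum_list (drop j I) = n"
    using sum by (metis append_take_drop_id sum_list_append)
  ultimately show "k \<in> {1..<n}" using j(1) by auto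
qed

lemma valleys_subset: "valleys I n \<subseteq> {1..n}"
  by (auto simp: valleys_def)

lemma subset_valleys_iff:
  assumes I: "is_composition I n" and D: "D \<subseteq> {1..n}"
  shows "D \<subseteq> valleys I n \<longleftrightarrow> (\<forall>i\<in>{1..<n}. if i \<in> Des I then i \<notin> D else i + 1 \<notin> D)"
proof
  assume "D \<subseteq> valleys I n"
  then show "\<forall>i\<in>{1..<n}. if i \<in> Des I then i \<notin> D else i + 1 \<notin> D"
    by (auto simp: valleys_def)
next
  assume H: "\<forall>i\<in>{1..<n}. if i \<in> Des I then i \<notin> D else i + 1 \<notin> D"
  show "D \<subseteq> valleys I n"
  proof
    fix k assume k: "k \<in> D"
    then have kn: "k \<in> {1..n}" using D by auto
    have "k \<notin> Des I"
    proof
      assume "k \<in> Des I"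
      then show False using H k Des_subset[OF I] by fastforce
    qed
    moreover have "k = 1 \<or> k - 1 \<in> Des I"
    proof (rule ccontr)
      assume "\<not> (k = 1 \<or> k - 1 \<in> Des I)"
      then have "k - 1 \<in> {1..<n}" "k - 1 \<notin> Des I" "k - 1 + 1 = k" using kn by auto
      then show False using H k by fastforce
    qed
    ultimately show "k \<in> valleys I n" using kn by (simp add: valleys_def)
  qed
qed

text \<open>The coordinates of \<open>(T\<^sub>i - t) (y \<epsilon>)\<close> when \<open>T\<^sub>i \<epsilon> = t \<epsilon>\<close>, read off from
  \<open>T_on_basis\<close> below.\<close>

definition eigen_defect :: "nat \<Rightarrow> complex \<Rightarrow> (nat set \<Rightarrow> complex) \<Rightarrow> nat set \<Rightarrow> complex" where
  "eigen_defect i t y D =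
     (if i \<in> D \<and> i + 1 \<in> D then - (1 + 2 * t) * y D
      else if i \<in> D then - t * y D + (t + 1) * y (insert (i + 1) (D - {i}))
      else if i + 1 \<in> D then t * y (insert i (D - {i + 1})) - (t + 1) * y D
      else y (insert i (insert (i + 1) D)))"

lemma eigen_defect_neg_one_vanishes_iff:
  assumes A: "i \<in> A" "i + 1 \<in> A"
  shows "(\<forall>D\<subseteq>A. eigen_defect i (-1) y D = 0) \<longleftrightarrow> (\<forall>D\<subseteq>A. y D \<noteq> 0 \<longrightarrow> i \<notin> D)"
proof
  assume H: "\<forall>D\<subseteq>A. eigen_defect i (-1) y D = 0"
  show "\<forall>D\<subseteq>A. y D \<noteq> 0 \<longrightarrow> i \<notin> D"
  proof (intro allI impI notI)
    fix D assume "D \<subseteq> A" "y D \<noteq> 0" "i \<in> D"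
    moreover from \<open>i \<in> D\<close> have "eigen_defect i (-1) y D = y D" by (simp add: eigen_defect_def)
    ultimately show False using H by simp
  qed
next
  assume "\<forall>D\<subseteq>A. y D \<noteq> 0 \<longrightarrow> i \<notin> D"
  then have y: "y X = 0" if "X \<subseteq> A" "i \<in> X" for X using that by blast
  show "\<forall>D\<subseteq>A. eigen_defect i (-1) y D = 0"
  proof (intro allI impI)
    fix D assume D: "D \<subseteq> A"
    have "y (insert i (D - {i + 1})) = 0" "y (insert i (insert (i + 1) D)) = 0"
      using D A by (auto intro: y)
    moreover have "i \<in> D \<Longrightarrow> y D = 0" using D by (rule y)
    ultimately show "eigen_defect i (-1) y D = 0" by (simp add: eigen_defect_def)
  qed
qed

lemma eigen_defect_zero_vanishes_iff:
  assumes A: "i \<in> A" "i + 1 \<in> A"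
  shows "(\<forall>D\<subseteq>A. eigen_defect i 0 y D = 0) \<longleftrightarrow> (\<forall>D\<subseteq>A. y D \<noteq> 0 \<longrightarrow> i + 1 \<notin> D)"
proof
  assume H: "\<forall>D\<subseteq>A. eigen_defect i 0 y D = 0"
  show "\<forall>D\<subseteq>A. y D \<noteq> 0 \<longrightarrow> i + 1 \<notin> D"
  proof (intro allI impI notI)
    fix D assume "D \<subseteq> A" "y D \<noteq> 0" "i + 1 \<in> D"
    moreover from \<open>i + 1 \<in> D\<close> have "eigen_defect i 0 y D = - y D" by (simp add: eigen_defect_def)
    ultimately show False using H by simp
  qed
next
  assume "\<forall>D\<subseteq>A. y D \<noteq> 0 \<longrightarrow> i + 1 \<notin> D"
  then have y: "y X = 0" if "X \<subseteq> A" "i + 1 \<in> X" for X using that by blast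
  show "\<forall>D\<subseteq>A. eigen_defect i 0 y D = 0"
  proof (intro allI impI)
    fix D assume D: "D \<subseteq> A"
    have "y (insert (i + 1) (D - {i})) = 0" "y (insert i (insert (i + 1) D)) = 0"
      using D A by (auto intro: y)
    moreover have "i + 1 \<in> D \<Longrightarrow> y D = 0" using D by (rule y)
    ultimately show "eigen_defect i 0 y D = 0" by (simp add: eigen_defect_def)
  qed
qed

section \<open>Clifford monomials in an \<open>HCl\<^sub>n(0)\<close>-module\<close>

lemma cmon_empty [simp]: "cmon C {} m = m"
  by (simp add: cmon_def)

lemma cmon_singleton [simp]: "cmon C {j} m = C j m"
  by (simp add: cmon_def)

lemma cmon_insert_min:
  assumes "finite X" "\<forall>x\<in>X. d < x"
  shows "cmon C (insert d X) m = C d (cmon C X m)"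
proof -
  have "Min (insert d X) = d" using assms by (auto intro!: Min_eqI simp: less_imp_le)
  moreover have "insert d X - {d} = X" using assms by auto
  ultimately have "sorted_list_of_set (insert d X) = d # sorted_list_of_set X"
    using assms sorted_list_of_set_nonempty[of "insert d X"] by simp
  then show ?thesis by (simp add: cmon_def)
qed

locale hcl_mod =
  fixes n :: nat and sc :: "complex \<Rightarrow> 'm::ab_group_add \<Rightarrow> 'm" and C T :: "nat \<Rightarrow> 'm \<Rightarrow> 'm"
  assumes hcl_module: "hcl_module n sc C T"
begin

sublocale V: vector_space sc
  using hcl_module unfolding hcl_module_def by (elim conjE)

lemma V_module: "module sc"
  by (simp add: V.module_axioms)

lemma C_hom: "j \<in> {1..n} \<Longrightarrow> module_hom sc sc (C j)"
  using hcl_module unfolding hcl_module_def module_hom_iff_linear by (elim conjE) blast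

lemma T_hom: "i \<in> {1..<n} \<Longrightarrow> module_hom sc sc (T i)"
  using hcl_module unfolding hcl_module_def module_hom_iff_linear by (elim conjE) blast

lemma hcl_relations:
  "\<forall>i\<in>{1..n}. \<forall>j\<in>{1..n}. i \<noteq> j \<longrightarrow> (\<forall>m. C i (C j m) = - C j (C i m))"
  "\<forall>i\<in>{1..n}. \<forall>m. C i (C i m) = - m"
  "\<forall>i\<in>{1..<n}. \<forall>j\<in>{1..n}. j \<noteq> i \<and> j \<noteq> i + 1 \<longrightarrow> (\<forall>m. T i (C j m) = C j (T i m))"
  "\<forall>i\<in>{1..<n}. \<forall>m. T i (C i m) = C (i + 1) (T i m)"
  "\<forall>i\<in>{1..<n}. \<forall>m. T i (C (i + 1) m) + C (i + 1) m = C i (T i m) + C i m"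
  by (insert hcl_module, unfold hcl_module_def, (elim conjE, assumption)+)

lemma C_anticommute: "i \<in> {1..n} \<Longrightarrow> j \<in> {1..n} \<Longrightarrow> i \<noteq> j \<Longrightarrow> C i (C j m) = - C j (C i m)"
  using hcl_relations(1) by blast

lemma C_C_self: "i \<in> {1..n} \<Longrightarrow> C i (C i m) = - m"
  using hcl_relations(2) by blast

lemma T_C_commute:
  "i \<in> {1..<n} \<Longrightarrow> j \<in> {1..n} \<Longrightarrow> j \<noteq> i \<Longrightarrow> j \<noteq> i + 1 \<Longrightarrow> T i (C j m) = C j (T i m)"
  using hcl_relations(3) by blast

lemma T_C_self: "i \<in> {1..<n} \<Longrightarrow> T i (C i m) = C (i + 1) (T i m)"
  using hcl_relations(4) by blast

lemma T_C_Suc: "i \<in> {1..<n} \<Longrightarrow> T i (C (i + 1) m) = C i (T i m) + C i m - C (i + 1) m"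
  using hcl_relations(5) by (simp add: eq_diff_eq)

lemmas C_scale = module_hom.scale[OF C_hom]
   and C_diff = module_hom.diff[OF C_hom]
   and T_scale = module_hom.scale[OF T_hom]
   and T_sum = module_hom.sum[OF T_hom]

lemma foldr_C_hom: "set xs \<subseteq> {1..n} \<Longrightarrow> module_hom sc sc (foldr C xs)"
proof (induction xs)
  case Nil
  then show ?case using V.module_hom_ident by (simp add: module_hom_iff_linear)
next
  case (Cons a xs)
  then have "module_hom sc sc (C a \<circ> foldr C xs)"
    by (intro module_hom_compose[OF _ C_hom]) auto
  then show ?case by (simp add: o_def)
qed

lemma cmon_hom:
  assumes "D \<subseteq> {1..n}"
  shows "module_hom sc sc (cmon C D)"
proof -
  have "finite D" using assms by (rule finite_subset[OF _ finite_atLeastAtMost])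
  then show ?thesis
    unfolding cmon_def[abs_def] using assms by (intro foldr_C_hom) simp
qed

lemmas cmon_scale = module_hom.scale[OF cmon_hom]
   and cmon_add = module_hom.add[OF cmon_hom]
   and cmon_diff = module_hom.diff[OF cmon_hom]
   and cmon_sum = module_hom.sum[OF cmon_hom]

lemma C_cmon:
  assumes j: "j \<in> {1..n}" and D: "D \<subseteq> {1..n}"
  shows "C j (cmon C D m) = sc (clsign {j} D) (cmon C (symdiff {j} D) m)"
proof -
  have "finite D" using D by (rule finite_subset[OF _ finite_atLeastAtMost])
  then show ?thesis using D
  proof (induction D arbitrary: m rule: finite_linorder_min_induct)
    case empty
    then show ?case by (simp add: clsign_eq_prod pair_sign_def)
  next
    case (insert d X)
    have d: "d \<in> {1..n}" and dX: "d \<notin> X" using insert by auto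
    have cmon_dX: "cmon C (insert d X) m = C d (cmon C X m)"
      using insert.hyps by (simp add: cmon_insert_min)
    consider "j < d" | "j = d" | "d < j" by arith
    then show ?case
    proof cases
      case 1
      then have "cmon C (insert j (insert d X)) m = C j (cmon C (insert d X) m)"
        using insert.hyps by (intro cmon_insert_min) auto
      moreover have "clsign {j} (insert d X) = 1"
        using 1 insert.hyps by (intro clsign_less) auto
      moreover have "j \<notin> insert d X" using 1 insert.hyps by auto
      ultimately show ?thesis by (simp add: symdiff_singleton)
    next
      case 2
      have "clsign {j} (insert d X) = -1"
        using 2 insert.hyps dX by (simp add: clsign_singleton_insert clsign_less pair_sign_def)
      then show ?thesis
        using 2 dX cmon_dX C_C_self[OF d] by (simp add: symdiff_singleton_insert)
    next
      case 3
      have "C j (cmon C (insert d X) m) = - C d (C j (cmon C X m))"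
        using cmon_dX C_anticommute[OF j d] 3 by simp
      also have "\<dots> = sc (- clsign {j} X) (C d (cmon C (symdiff {j} X) m))"
        using insert.IH insert.prems C_scale[OF d] by simp
      also have "C d (cmon C (symdiff {j} X) m) = cmon C (insert d (symdiff {j} X)) m"
        using 3 insert.hyps by (intro cmon_insert_min[symmetric]) (auto simp: symdiff_def)
      also have "insert d (symdiff {j} X) = symdiff {j} (insert d X)"
        using 3 dX by (auto simp: symdiff_def)
      also have "- clsign {j} X = clsign {j} (insert d X)"
        using 3 insert.hyps dX by (simp add: clsign_singleton_insert pair_sign_def)
      finally show ?thesis .
    qed
  qed
qed

lemma cmon_cmon:
  assumes D: "D \<subseteq> {1..n}" and E: "E \<subseteq> {1..n}"
  shows "cmon C D (cmon C E m) = sc (clsign D E) (cmon C (symdiff D E) m)"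
proof -
  have fE: "finite E" using E by (rule finite_subset[OF _ finite_atLeastAtMost])
  have "finite D" using D by (rule finite_subset[OF _ finite_atLeastAtMost])
  then show ?thesis using D
  proof (induction D rule: finite_linorder_min_induct)
    case empty
    then show ?case by (simp add: clsign_def)
  next
    case (insert d X)
    have X: "X \<subseteq> {1..n}" and d: "d \<in> {1..n}" and dX: "d \<notin> X" using insert by auto
    have "cmon C (insert d X) (cmon C E m) = C d (cmon C X (cmon C E m))"
      using insert.hyps by (simp add: cmon_insert_min)
    also have "\<dots> = sc (clsign X E) (C d (cmon C (symdiff X E) m))"
      using insert.IH X C_scale[OF d] by simp
    also have "C d (cmon C (symdiff X E) m) =
        sc (clsign {d} (symdiff X E)) (cmon C (symdiff (insert d X) E) m)"
      using C_cmon[OF d symdiff_subset[OF X E]] dX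
      by (simp add: symdiff_assoc[symmetric] symdiff_singleton)
    also have "clsign {d} (symdiff X E) = clsign {d} E"
      using insert.hyps fE by (simp add: clsign_symdiff_right clsign_less)
    also have "sc (clsign X E) (sc (clsign {d} E) (cmon C (symdiff (insert d X) E) m)) =
        sc (clsign (insert d X) E) (cmon C (symdiff (insert d X) E) m)"
      using clsign_symdiff_left[of "{d}" X E] insert.hyps fE dX
      by (simp add: symdiff_singleton mult.commute)
    finally show ?case .
  qed
qed

lemma cmon_union_less:
  assumes "A \<subseteq> {1..n}" "B \<subseteq> {1..n}" "\<forall>a\<in>A. \<forall>b\<in>B. a < b"
  shows "cmon C A (cmon C B m) = cmon C (A \<union> B) m"
proof -
  have "finite A" "finite B" using assms(1,2) by (auto intro: finite_subset[OF _ finite_atLeastAtMost])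
  then have "clsign A B = 1" using assms by (intro clsign_less) auto
  moreover have "symdiff A B = A \<union> B" using assms(3) by (auto simp: symdiff_def)
  ultimately show ?thesis using cmon_cmon[OF assms(1,2)] by simp
qed

lemma clact_clbasis:
  assumes "D \<subseteq> {1..n}"
  shows "clact n sc C (clbasis D) m = cmon C D m"
proof -
  have "clact n sc C (clbasis D) m = (\<Sum>E\<in>Pow {1..n}. if E = D then cmon C D m else 0)"
    unfolding clact_def clbasis_def by (intro sum.cong refl) auto
  then show ?thesis using assms by (simp add: sum.delta)
qed

lemma clact_clone: "clact n sc C clone m = m"
  by (simp add: clone_eq_clbasis clact_clbasis)

lemma clact_clgen: "j \<in> {1..n} \<Longrightarrow> clact n sc C (clgen j) m = C j m"
  by (simp add: clgen_eq_clbasis clact_clbasis)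

lemma clact_cladd: "clact n sc C (cladd x y) m = clact n sc C x m + clact n sc C y m"
  unfolding clact_def cladd_def by (simp add: V.scale_left_distrib sum.distrib)

lemma clact_clscale: "clact n sc C (clscale a x) m = sc a (clact n sc C x m)"
  unfolding clact_def clscale_def by (simp add: V.scale_sum_right)

lemma clact_hom: "module_hom sc sc (clact n sc C x)"
  unfolding module_hom_iff
proof (intro conjI allI V_module)
  fix m1 m2
  show "clact n sc C x (m1 + m2) = clact n sc C x m1 + clact n sc C x m2"
    unfolding clact_def sum.distrib[symmetric]
    by (intro sum.cong refl) (simp add: cmon_add V.scale_right_distrib)
next
  fix c m
  show "clact n sc C x (sc c m) = sc c (clact n sc C x m)"
    unfolding clact_def V.scale_sum_right
    by (intro sum.cong refl) (simp add: cmon_scale mult.commute)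
qed

lemmas clact_add = module_hom.add[OF clact_hom]
   and clact_scale = module_hom.scale[OF clact_hom]

lemma clact_clmul: "clact n sc C (clmul n x y) m = clact n sc C x (clact n sc C y m)"
proof -
  let ?P = "Pow {1..n}"
  have "clact n sc C (clmul n x y) m =
      (\<Sum>E\<in>?P. \<Sum>D\<in>?P. sc (x D * y (symdiff D E) * clsign D (symdiff D E)) (cmon C E m))"
    unfolding clact_def clmul_def by (simp add: V.scale_sum_left)
  also have "\<dots> = (\<Sum>D\<in>?P. \<Sum>E\<in>?P. sc (x D * y (symdiff D E) * clsign D (symdiff D E)) (cmon C E m))"
    by (rule sum.swap)
  also have "\<dots> = (\<Sum>D\<in>?P. \<Sum>F\<in>?P. sc (x D * y F * clsign D F) (cmon C (symdiff D F) m))"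
  proof (rule sum.cong[OF refl])
    fix D assume "D \<in> ?P"
    then have "\<forall>E\<in>?P. symdiff D E \<in> ?P" by (auto simp: symdiff_def)
    then show "(\<Sum>E\<in>?P. sc (x D * y (symdiff D E) * clsign D (symdiff D E)) (cmon C E m)) =
        (\<Sum>F\<in>?P. sc (x D * y F * clsign D F) (cmon C (symdiff D F) m))"
      by (intro sum.reindex_bij_witness[of _ "symdiff D" "symdiff D"]) (auto simp del: Pow_iff)
  qed
  also have "\<dots> = clact n sc C x (clact n sc C y m)"
    unfolding clact_def
  proof (rule sum.cong[OF refl])
    fix D assume "D \<in> ?P"
    then show "(\<Sum>F\<in>?P. sc (x D * y F * clsign D F) (cmon C (symdiff D F) m)) =
        sc (x D) (cmon C D (\<Sum>F\<in>?P. sc (y F) (cmon C F m)))"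
      by (simp add: cmon_sum cmon_scale cmon_cmon V.scale_sum_right mult.assoc)
  qed
  finally show ?thesis .
qed

lemma commute_cmon:
  assumes g: "module_hom sc sc g" and gC: "\<And>j m. j \<in> {1..n} \<Longrightarrow> g (C j m) = C j (g m)"
    and D: "D \<subseteq> {1..n}"
  shows "g (cmon C D m) = cmon C D (g m)"
proof -
  have "g (foldr C xs m) = foldr C xs (g m)" if "set xs \<subseteq> {1..n}" for xs
    using that by (induction xs) (auto simp: gC)
  moreover have "finite D" using D by (rule finite_subset[OF _ finite_atLeastAtMost])
  ultimately show ?thesis using D by (simp add: cmon_def)
qed

lemma commute_clact:
  assumes g: "module_hom sc sc g" and gC: "\<And>j m. j \<in> {1..n} \<Longrightarrow> g (C j m) = C j (g m)"
  shows "g (clact n sc C x m) = clact n sc C x (g m)"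
  unfolding clact_def using commute_cmon[OF g gC]
  by (simp add: module_hom.sum[OF g] module_hom.scale[OF g])

lemma commute_T_C:
  assumes g: "module_hom sc sc g" and gC: "\<And>j m. j \<in> {1..n} \<Longrightarrow> g (C j m) = C j (g m)"
    and i: "i \<in> {1..<n}" and j: "j \<in> {1..n}" and gT: "g (T i m) = T i (g m)"
  shows "g (T i (C j m)) = T i (g (C j m))"
proof -
  have i1: "i \<in> {1..n}" "i + 1 \<in> {1..n}" using i by auto
  consider "j = i" | "j = i + 1" | "j \<noteq> i" "j \<noteq> i + 1" by blast
  then show ?thesis
  proof cases
    case 1
    then show ?thesis using gT i1 by (simp add: T_C_self[OF i] gC)
  next
    case 2
    have "g (T i (C (i + 1) m)) = C i (T i (g m)) + C i (g m) - C (i + 1) (g m)"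
      using i1 by (simp only: T_C_Suc[OF i] module_hom.add[OF g] module_hom.diff[OF g] gC gT)
    also have "\<dots> = T i (g (C (i + 1) m))"
      using i1 by (simp only: T_C_Suc[OF i] gC)
    finally show ?thesis using 2 by simp
  next
    case 3
    then show ?thesis using gT j by (simp add: T_C_commute[OF i j] gC)
  qed
qed

lemma T_cmon_commute:
  assumes i: "i \<in> {1..<n}" and D: "D \<subseteq> {1..n} - {i, i + 1}"
  shows "T i (cmon C D m) = cmon C D (T i m)"
proof -
  have "T i (foldr C xs m) = foldr C xs (T i m)" if "set xs \<subseteq> {1..n} - {i, i + 1}" for xs
    using that by (induction xs) (auto simp: T_C_commute[OF i])
  moreover have "finite D" using D by (auto intro: finite_subset[OF _ finite_atLeastAtMost])
  ultimately show ?thesis using D by (simp add: cmon_def)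
qed

lemma T_on_eigenvector:
  assumes i: "i \<in> {1..<n}" and w: "T i w = sc t w"
  shows "T i (C i w) = sc t (C (i + 1) w)"
    and "T i (C (i + 1) w) = sc (t + 1) (C i w) - C (i + 1) w"
    and "T i (C i (C (i + 1) w)) = w - sc (t + 1) (C i (C (i + 1) w))"
proof -
  have i1: "i \<in> {1..n}" "i + 1 \<in> {1..n}" using i by auto
  show "T i (C i w) = sc t (C (i + 1) w)"
    using i1 by (simp add: T_C_self[OF i] w C_scale)
  have "T i (C (i + 1) w) = C i (sc t w) + C i w - C (i + 1) w"
    by (simp only: T_C_Suc[OF i] w)
  then show Suc: "T i (C (i + 1) w) = sc (t + 1) (C i w) - C (i + 1) w"
    using i1 by (simp add: C_scale V.scale_left_distrib)
  have "T i (C i (C (i + 1) w)) = C (i + 1) (sc (t + 1) (C i w) - C (i + 1) w)"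
    by (simp only: T_C_self[OF i] Suc)
  also have "\<dots> = w - sc (t + 1) (C i (C (i + 1) w))"
    using i1 C_anticommute[of "i + 1" i w] by (simp add: C_diff C_scale C_C_self)
  finally show "T i (C i (C (i + 1) w)) = w - sc (t + 1) (C i (C (i + 1) w))" .
qed

end

section \<open>The induced module \<open>M\<^sub>I\<close>\<close>

locale induced_module =
  fixes n :: nat and I :: "nat list" and sc :: "complex \<Rightarrow> 'm::ab_group_add \<Rightarrow> 'm"
    and C T :: "nat \<Rightarrow> 'm \<Rightarrow> 'm" and eps :: 'm
  assumes is_MI: "is_MI n I sc C T eps"
begin

sublocale hcl_mod n sc C T
  using is_MI unfolding is_MI_def by unfold_locales (elim conjE)

definition tau :: "nat \<Rightarrow> complex" where
  "tau i = (if i \<in> Des I then -1 else 0)"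

lemma T_eps: "i \<in> {1..<n} \<Longrightarrow> T i eps = sc (tau i) eps"
  using is_MI by (simp add: is_MI_def tau_def)

lemma basis_inj: "inj_on (\<lambda>D. cmon C D eps) (Pow {1..n})"
  using is_MI by (simp add: is_MI_def)

lemma basis_independent: "\<not> V.dependent ((\<lambda>D. cmon C D eps) ` Pow {1..n})"
  using is_MI by (simp add: is_MI_def)

lemma basis_span: "V.span ((\<lambda>D. cmon C D eps) ` Pow {1..n}) = UNIV"
  using is_MI by (simp add: is_MI_def)

lemma clact_eps_eq_0_iff: "clact n sc C x eps = 0 \<longleftrightarrow> (\<forall>D\<subseteq>{1..n}. x D = 0)"
proof
  let ?b = "\<lambda>D. cmon C D eps"
  assume x: "clact n sc C x eps = 0"
  define u where "u v = x (the_inv_into (Pow {1..n}) ?b v)" for v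
  have u: "u (?b D) = x D" if "D \<in> Pow {1..n}" for D
    unfolding u_def using the_inv_into_f_f[OF basis_inj that] by simp
  have "(\<Sum>v\<in>?b ` Pow {1..n}. sc (u v) v) = (\<Sum>D\<in>Pow {1..n}. sc (u (?b D)) (?b D))"
    by (rule sum.reindex[OF basis_inj, unfolded o_def])
  also have "\<dots> = clact n sc C x eps"
    unfolding clact_def by (intro sum.cong refl) (simp add: u del: Pow_iff)
  finally have "\<forall>v\<in>?b ` Pow {1..n}. u v = 0"
    using x basis_independent V.dependent_finite[of "?b ` Pow {1..n}"] by auto
  then show "\<forall>D\<subseteq>{1..n}. x D = 0" using u by auto
qed (simp add: clact_def)

lemma bij_betw_clact_eps: "bij_betw (\<lambda>x. clact n sc C x eps) (clifford n) UNIV"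
proof (rule bij_betw_imageI)
  show "inj_on (\<lambda>x. clact n sc C x eps) (clifford n)"
  proof (rule inj_onI)
    fix x x' assume x: "x \<in> clifford n" and x': "x' \<in> clifford n"
      and eq: "clact n sc C x eps = clact n sc C x' eps"
    have "clact n sc C (cladd x (clscale (-1) x')) eps = 0"
      using eq by (simp add: clact_cladd clact_clscale)
    then have "\<forall>D\<subseteq>{1..n}. x D = x' D"
      by (simp add: clact_eps_eq_0_iff cladd_def clscale_def)
    show "x = x'"
    proof
      fix D
      show "x D = x' D"
      proof (cases "D \<subseteq> {1..n}")
        case False
        then have "x D = 0" "x' D = 0" using x x' unfolding clifford_def by blast+
        then show ?thesis by simp
      qed (use \<open>\<forall>D\<subseteq>{1..n}. x D = x' D\<close> in simp)
    qed
  qed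
  show "(\<lambda>x. clact n sc C x eps) ` clifford n = UNIV"
  proof (intro set_eqI iffI)
    let ?b = "\<lambda>D. cmon C D eps"
    fix m :: 'm
    have "m \<in> V.span (?b ` Pow {1..n})" using basis_span by simp
    then obtain u where u: "m = (\<Sum>v\<in>?b ` Pow {1..n}. sc (u v) v)"
      using V.span_finite[of "?b ` Pow {1..n}"] by auto
    define x where "x D = (if D \<subseteq> {1..n} then u (?b D) else 0)" for D
    have "clact n sc C x eps = (\<Sum>D\<in>Pow {1..n}. sc (u (?b D)) (?b D))"
      unfolding clact_def x_def by (intro sum.cong refl) auto
    also have "\<dots> = m"
      unfolding u by (rule sum.reindex[OF basis_inj, unfolded o_def, symmetric])
    finally show "m \<in> (\<lambda>x. clact n sc C x eps) ` clifford n"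
      by (intro image_eqI[of _ _ x]) (auto simp: x_def clifford_def)
  qed simp
qed

definition coord :: "'m \<Rightarrow> nat set \<Rightarrow> complex" where
  "coord = the_inv_into (clifford n) (\<lambda>x. clact n sc C x eps)"

lemma coord_in_clifford: "coord m \<in> clifford n"
  unfolding coord_def using bij_betw_the_inv_into[OF bij_betw_clact_eps] by (auto simp: bij_betw_def)

lemma clact_coord [simp]: "clact n sc C (coord m) eps = m"
  unfolding coord_def using f_the_inv_into_f_bij_betw[OF bij_betw_clact_eps] by simp

lemma coord_clact: "x \<in> clifford n \<Longrightarrow> coord (clact n sc C x eps) = x"
  unfolding coord_def by (rule the_inv_into_f_f[OF bij_betw_imp_inj_on[OF bij_betw_clact_eps]])

lemma coord_eqI: "x \<in> clifford n \<Longrightarrow> clact n sc C x eps = m \<Longrightarrow> coord m = x"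
  using coord_clact by blast

lemma coord_add: "coord (m + m') = cladd (coord m) (coord m')"
  by (intro coord_eqI cladd_in_clifford coord_in_clifford) (simp add: clact_cladd)

lemma coord_scale: "coord (sc a m) = clscale a (coord m)"
  by (intro coord_eqI clscale_in_clifford coord_in_clifford) (simp add: clact_clscale)

lemma coord_C: "j \<in> {1..n} \<Longrightarrow> coord (C j m) = clmul n (clgen j) (coord m)"
  by (intro coord_eqI clmul_in_clifford coord_in_clifford) (simp add: clact_clmul clact_clgen)

lemma coord_eps: "coord eps = clone"
  by (intro coord_eqI) (simp_all add: clone_eq_clbasis clbasis_in_clifford clact_clbasis)

lemma eq_on_basis:
  assumes "module_hom sc sc f" "module_hom sc sc g"
    and "\<And>D. D \<subseteq> {1..n} \<Longrightarrow> f (cmon C D eps) = g (cmon C D eps)"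
  shows "f m = g m"
proof -
  interpret module_pair sc sc by (simp add: module_pair_def V_module)
  have "m \<in> V.span ((\<lambda>D. cmon C D eps) ` Pow {1..n})" using basis_span by blast
  from module_hom_eq_on_span[OF assms(1,2) _ this] show ?thesis using assms(3) by auto
qed

lemma T_on_basis:
  assumes i: "i \<in> {1..<n}" and D: "D \<subseteq> {1..n} - {i, i + 1}"
  shows "T i (cmon C D eps) = sc (tau i) (cmon C D eps)"
    and "T i (cmon C (insert i D) eps) = sc (tau i) (cmon C (insert (i + 1) D) eps)"
    and "T i (cmon C (insert (i + 1) D) eps) =
      sc (tau i + 1) (cmon C (insert i D) eps) - cmon C (insert (i + 1) D) eps"
    and "T i (cmon C (insert i (insert (i + 1) D)) eps) =
      cmon C D eps - sc (tau i + 1) (cmon C (insert i (insert (i + 1) D)) eps)"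
proof -
  txt \<open>\<open>T\<^sub>i\<close> commutes with the monomials in the elements of \<open>D\<close> below \<open>i\<close> (the set \<open>P\<close>) and
    above \<open>i + 1\<close> (the set \<open>Q\<close>); so \<open>w\<close> is an eigenvector like \<open>\<epsilon>\<close> and
    \<open>T_on_eigenvector\<close> applies.\<close>
  define P where "P = {d\<in>D. d < i}"
  define Q where "Q = {d\<in>D. i + 1 < d}"
  define w where "w = cmon C Q eps"
  have i1: "i \<in> {1..n}" "i + 1 \<in> {1..n}" using i by auto
  have P: "P \<subseteq> {1..n} - {i, i + 1}" and Q: "Q \<subseteq> {1..n} - {i, i + 1}"
    using D by (auto simp: P_def Q_def)
  have split: "cmon C (R \<union> D) eps = cmon C P (cmon C R w)" if R: "R \<subseteq> {i, i + 1}" for R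
  proof -
    have "cmon C R w = cmon C (R \<union> Q) eps"
      unfolding w_def using R Q i1 by (intro cmon_union_less) (auto simp: Q_def)
    moreover have "cmon C P (cmon C (R \<union> Q) eps) = cmon C (P \<union> (R \<union> Q)) eps"
      using R P Q i1 by (intro cmon_union_less) (auto simp: P_def Q_def)
    moreover have "P \<union> (R \<union> Q) = R \<union> D" using D by (auto simp: P_def Q_def)
    ultimately show ?thesis by simp
  qed
  have "cmon C {i, i + 1} w = C i (C (i + 1) w)" by (subst cmon_insert_min) auto
  then have s: "cmon C D eps = cmon C P w" "cmon C (insert i D) eps = cmon C P (C i w)"
      "cmon C (insert (i + 1) D) eps = cmon C P (C (i + 1) w)"
      "cmon C (insert i (insert (i + 1) D)) eps = cmon C P (C i (C (i + 1) w))"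
    using split[of "{}"] split[of "{i}"] split[of "{i + 1}"] split[of "{i, i + 1}"] by simp_all
  have "T i w = sc (tau i) w"
  proof -
    have "Q \<subseteq> {1..n}" using Q by auto
    then show ?thesis unfolding w_def T_cmon_commute[OF i Q] T_eps[OF i] by (rule cmon_scale)
  qed
  note Tw = T_on_eigenvector[OF i this]
  have TP: "T i (cmon C P z) = cmon C P (T i z)" for z using T_cmon_commute[OF i P] .
  have P': "P \<subseteq> {1..n}" using P by auto
  show "T i (cmon C D eps) = sc (tau i) (cmon C D eps)"
    unfolding s TP \<open>T i w = sc (tau i) w\<close> cmon_scale[OF P'] ..
  show "T i (cmon C (insert i D) eps) = sc (tau i) (cmon C (insert (i + 1) D) eps)"
    unfolding s TP Tw(1) cmon_scale[OF P'] ..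
  show "T i (cmon C (insert (i + 1) D) eps) =
      sc (tau i + 1) (cmon C (insert i D) eps) - cmon C (insert (i + 1) D) eps"
    unfolding s TP Tw(2) cmon_scale[OF P'] cmon_diff[OF P'] ..
  show "T i (cmon C (insert i (insert (i + 1) D)) eps) =
      cmon C D eps - sc (tau i + 1) (cmon C (insert i (insert (i + 1) D)) eps)"
    unfolding s TP Tw(3) cmon_scale[OF P'] cmon_diff[OF P'] ..
qed

lemma T_clact_minus_eigen:
  assumes i: "i \<in> {1..<n}"
  shows "T i (clact n sc C y eps) - sc (tau i) (clact n sc C y eps) =
    clact n sc C (eigen_defect i (tau i) y) eps"
proof -
  define t where "t = tau i"
  define S where "S = {1..n} - {i, i + 1}"
  define g where "g D = sc (y D) (T i (cmon C D eps)) - sc t (sc (y D) (cmon C D eps))" for D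
  define h where "h D = sc (eigen_defect i t y D) (cmon C D eps)" for D
  have block: "g D + g (insert i D) + (g (insert (i + 1) D) + g (insert i (insert (i + 1) D))) =
      h D + h (insert i D) + (h (insert (i + 1) D) + h (insert i (insert (i + 1) D)))"
    if "D \<in> Pow S" for D
  proof -
    from that have D: "D \<subseteq> {1..n} - {i, i + 1}" by (simp add: S_def)
    then have "i \<notin> D" "i + 1 \<notin> D" by auto
    then have "h D = sc (y (insert i (insert (i + 1) D))) (cmon C D eps)"
      "h (insert i D) = sc (- t * y (insert i D) + (t + 1) * y (insert (i + 1) D)) (cmon C (insert i D) eps)"
      "h (insert (i + 1) D) =
        sc (t * y (insert i D) - (t + 1) * y (insert (i + 1) D)) (cmon C (insert (i + 1) D) eps)"
      "h (insert i (insert (i + 1) D)) =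
        sc (- (1 + 2 * t) * y (insert i (insert (i + 1) D))) (cmon C (insert i (insert (i + 1) D)) eps)"
      by (simp_all add: h_def eigen_defect_def insert_commute)
    moreover have "t = -1 \<or> t = 0" by (simp add: t_def tau_def)
    ultimately show ?thesis
      unfolding g_def T_on_basis[OF i D, folded t_def]
      by (elim disjE) (simp_all add: V.scale_right_diff_distrib V.scale_left_diff_distrib
          V.scale_left_distrib algebra_simps)
  qed
  have nS: "{1..n} = insert i (insert (i + 1) S)" using i by (auto simp: S_def)
  have "T i (clact n sc C y eps) - sc t (clact n sc C y eps) = (\<Sum>D\<in>Pow {1..n}. g D)"
    unfolding clact_def g_def by (simp add: T_sum[OF i] T_scale[OF i] V.scale_sum_right sum_subtractf)
  also have "\<dots> = (\<Sum>D\<in>Pow S. g D + g (insert i D) + (g (insert (i + 1) D) + g (insert i (insert (i + 1) D))))"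
    unfolding nS by (rule sum_Pow_insert_insert) (auto simp: S_def)
  also have "\<dots> = (\<Sum>D\<in>Pow S. h D + h (insert i D) + (h (insert (i + 1) D) + h (insert i (insert (i + 1) D))))"
    using block by (rule sum.cong[OF refl])
  also have "\<dots> = (\<Sum>D\<in>Pow {1..n}. h D)"
    unfolding nS by (rule sum_Pow_insert_insert[symmetric]) (auto simp: S_def)
  also have "\<dots> = clact n sc C (eigen_defect i t y) eps"
    by (simp add: clact_def h_def)
  finally show ?thesis by (simp add: t_def)
qed

lemma T_clact_eigen_iff:
  assumes i: "i \<in> {1..<n}"
  shows "T i (clact n sc C y eps) = sc (tau i) (clact n sc C y eps) \<longleftrightarrow>
    (\<forall>D\<subseteq>{1..n}. y D \<noteq> 0 \<longrightarrow> (if i \<in> Des I then i \<notin> D else i + 1 \<notin> D))"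
proof -
  have "T i (clact n sc C y eps) = sc (tau i) (clact n sc C y eps) \<longleftrightarrow>
      clact n sc C (eigen_defect i (tau i) y) eps = 0"
    by (simp flip: T_clact_minus_eigen[OF i])
  also have "\<dots> \<longleftrightarrow> (\<forall>D\<subseteq>{1..n}. eigen_defect i (if i \<in> Des I then -1 else 0) y D = 0)"
    by (simp add: clact_eps_eq_0_iff tau_def)
  also have "\<dots> \<longleftrightarrow> (\<forall>D\<subseteq>{1..n}. y D \<noteq> 0 \<longrightarrow> (if i \<in> Des I then i \<notin> D else i + 1 \<notin> D))"
  proof -
    have A: "i \<in> {1..n}" "i + 1 \<in> {1..n}" using i by auto
    show ?thesis
      using eigen_defect_neg_one_vanishes_iff[OF A] eigen_defect_zero_vanishes_iff[OF A]
      by (cases "i \<in> Des I") simp_all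
  qed
  finally show ?thesis .
qed

lemma commute_T_if_commute_T_eps:
  assumes g: "module_hom sc sc g" and gC: "\<And>j m. j \<in> {1..n} \<Longrightarrow> g (C j m) = C j (g m)"
    and i: "i \<in> {1..<n}" and gT: "g (T i eps) = T i (g eps)"
  shows "g (T i m) = T i (g m)"
proof -
  have "g (T i (foldr C xs eps)) = T i (g (foldr C xs eps))" if "set xs \<subseteq> {1..n}" for xs
    using that by (induction xs) (auto simp: gT intro: commute_T_C[OF g gC i])
  then have basis: "g (T i (cmon C D eps)) = T i (g (cmon C D eps))" if "D \<subseteq> {1..n}" for D
    using that finite_subset[OF that finite_atLeastAtMost] by (simp add: cmon_def)
  have "module_hom sc sc (\<lambda>m. g (T i m))" "module_hom sc sc (\<lambda>m. T i (g m))"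
    using module_hom_compose[OF T_hom[OF i] g] module_hom_compose[OF g T_hom[OF i]]
    by (simp_all add: o_def)
  then show ?thesis using basis by (rule eq_on_basis)
qed

definition rmult :: "(nat set \<Rightarrow> complex) \<Rightarrow> 'm \<Rightarrow> 'm" where
  "rmult c m = clact n sc C (clmul n (coord m) c) eps"

lemma rmult_clact: "x \<in> clifford n \<Longrightarrow> rmult c (clact n sc C x eps) = clact n sc C (clmul n x c) eps"
  by (simp add: rmult_def coord_clact)

lemma rmult_eq: "rmult c m = clact n sc C (coord m) (clact n sc C c eps)"
  by (simp add: rmult_def clact_clmul)

lemma rmult_eps: "rmult c eps = clact n sc C c eps"
  by (simp add: rmult_eq coord_eps clact_clone)

lemma rmult_hom: "module_hom sc sc (rmult c)"
  unfolding module_hom_iff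
  by (simp add: V_module rmult_eq coord_add coord_scale clact_cladd clact_clscale)

lemma rmult_C: "j \<in> {1..n} \<Longrightarrow> rmult c (C j m) = C j (rmult c m)"
  by (simp add: rmult_eq coord_C clact_clmul clact_clgen)

lemma rmult_clmul: "c \<in> clifford n \<Longrightarrow> rmult (clmul n c c') = rmult c' \<circ> rmult c"
  by (simp add: fun_eq_iff rmult_def coord_clact clmul_in_clifford) (simp add: rmult_eq clact_clmul)

lemma rmult_cladd_clscale: "rmult (cladd (clscale a c) c') m = sc a (rmult c m) + rmult c' m"
  by (simp add: rmult_eq clact_cladd clact_clscale clact_add clact_scale)

lemma hcl_endo_eq_rmult:
  assumes "g \<in> hcl_endos n sc C T"
  shows "g = rmult (coord (g eps))"
proof
  fix m
  have g: "module_hom sc sc g" and gC: "\<And>j m. j \<in> {1..n} \<Longrightarrow> g (C j m) = C j (g m)"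
    using assms by (simp_all add: hcl_endos_def module_hom_iff_linear)
  have "g m = g (clact n sc C (coord m) eps)" by simp
  also have "\<dots> = clact n sc C (coord m) (g eps)" by (rule commute_clact[OF g gC])
  finally show "g m = rmult (coord (g eps)) m" by (simp add: rmult_eq)
qed

lemma rmult_in_hcl_endos_iff:
  "rmult y \<in> hcl_endos n sc C T \<longleftrightarrow>
    (\<forall>i\<in>{1..<n}. T i (clact n sc C y eps) = sc (tau i) (clact n sc C y eps))"
proof
  assume "rmult y \<in> hcl_endos n sc C T"
  then have "rmult y (T i eps) = T i (rmult y eps)" if "i \<in> {1..<n}" for i
    using that by (simp add: hcl_endos_def)
  then show "\<forall>i\<in>{1..<n}. T i (clact n sc C y eps) = sc (tau i) (clact n sc C y eps)"
    by (simp add: T_eps rmult_eps module_hom.scale[OF rmult_hom])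
next
  assume eigen: "\<forall>i\<in>{1..<n}. T i (clact n sc C y eps) = sc (tau i) (clact n sc C y eps)"
  have "rmult y (T i m) = T i (rmult y m)" if i: "i \<in> {1..<n}" for i m
  proof (rule commute_T_if_commute_T_eps[OF rmult_hom rmult_C i])
    have "rmult y (T i eps) = sc (tau i) (clact n sc C y eps)"
      by (simp add: T_eps[OF i] rmult_eps module_hom.scale[OF rmult_hom])
    also have "\<dots> = T i (rmult y eps)" using eigen i by (simp add: rmult_eps)
    finally show "rmult y (T i eps) = T i (rmult y eps)" .
  qed
  then show "rmult y \<in> hcl_endos n sc C T"
    using rmult_hom rmult_C by (simp add: hcl_endos_def module_hom_iff_linear)
qed

lemma rmult_in_hcl_endos_iff_clsub:
  assumes I: "is_composition I n" and y: "y \<in> clifford n"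
  shows "rmult y \<in> hcl_endos n sc C T \<longleftrightarrow> y \<in> clsub n (valleys I n)"
proof -
  have "rmult y \<in> hcl_endos n sc C T \<longleftrightarrow>
      (\<forall>i\<in>{1..<n}. \<forall>D\<subseteq>{1..n}. y D \<noteq> 0 \<longrightarrow> (if i \<in> Des I then i \<notin> D else i + 1 \<notin> D))"
    by (simp add: rmult_in_hcl_endos_iff T_clact_eigen_iff)
  also have "\<dots> \<longleftrightarrow>
      (\<forall>D\<subseteq>{1..n}. y D \<noteq> 0 \<longrightarrow> (\<forall>i\<in>{1..<n}. if i \<in> Des I then i \<notin> D else i + 1 \<notin> D))"
    by blast
  also have "\<dots> \<longleftrightarrow> (\<forall>D\<subseteq>{1..n}. y D \<noteq> 0 \<longrightarrow> D \<subseteq> valleys I n)"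
    by (simp add: subset_valleys_iff[OF I])
  also have "\<dots> \<longleftrightarrow> (\<forall>D. y D \<noteq> 0 \<longrightarrow> D \<subseteq> valleys I n)"
    using y unfolding clifford_def by blast
  also have "\<dots> \<longleftrightarrow> y \<in> clsub n (valleys I n)"
    by (simp add: clsub_eq_supported[OF valleys_subset])
  finally show ?thesis .
qed

lemma bij_betw_rmult:
  assumes I: "is_composition I n"
  shows "bij_betw rmult (clsub n (valleys I n)) (hcl_endos n sc C T)"
proof (rule bij_betw_imageI)
  have sub: "clsub n (valleys I n) \<subseteq> clifford n" by (rule clsub_subset_clifford[OF valleys_subset])
  show "inj_on rmult (clsub n (valleys I n))"
  proof (rule inj_onI)
    fix c c' assume "c \<in> clsub n (valleys I n)" "c' \<in> clsub n (valleys I n)" "rmult c = rmult c'"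
    then show "c = c'"
      using sub bij_betw_imp_inj_on[OF bij_betw_clact_eps] by (metis inj_onD rmult_eps subsetD)
  qed
  show "rmult ` clsub n (valleys I n) = hcl_endos n sc C T"
  proof (intro equalityI subsetI)
    fix g assume "g \<in> rmult ` clsub n (valleys I n)"
    then show "g \<in> hcl_endos n sc C T" using sub rmult_in_hcl_endos_iff_clsub[OF I] by blast
  next
    fix g assume g: "g \<in> hcl_endos n sc C T"
    then have "rmult (coord (g eps)) \<in> hcl_endos n sc C T" by (metis hcl_endo_eq_rmult)
    then have "coord (g eps) \<in> clsub n (valleys I n)"
      using rmult_in_hcl_endos_iff_clsub[OF I coord_in_clifford] by blast
    then show "g \<in> rmult ` clsub n (valleys I n)" using hcl_endo_eq_rmult[OF g] by blast
  qed
qed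

lemma clact_in_span:
  assumes "\<And>E. E \<subseteq> {1..n} \<Longrightarrow> x E \<noteq> 0 \<Longrightarrow> P E"
  shows "clact n sc C x eps \<in> V.span ((\<lambda>D. cmon C D eps) ` {E\<in>Pow {1..n}. P E})"
  unfolding clact_def
proof (rule V.span_sum)
  fix E assume E: "E \<in> Pow {1..n}"
  show "sc (x E) (cmon C E eps) \<in> V.span ((\<lambda>D. cmon C D eps) ` {E\<in>Pow {1..n}. P E})"
  proof (cases "x E = 0")
    case False
    then show ?thesis using assms E by (intro V.span_scale V.span_base) auto
  qed (simp add: V.span_zero)
qed

lemma rmult_parity_span:
  assumes c: "c \<in> clifford n" and q: "\<And>D. c D \<noteq> 0 \<Longrightarrow> even (card D) \<longleftrightarrow> q"
  shows "rmult c ` V.span ((\<lambda>D. cmon C D eps) ` {D\<in>Pow {1..n}. even (card D) = p})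
    \<subseteq> V.span ((\<lambda>D. cmon C D eps) ` {D\<in>Pow {1..n}. even (card D) = (p = q)})"
proof -
  let ?S = "V.span ((\<lambda>D. cmon C D eps) ` {D\<in>Pow {1..n}. even (card D) = (p = q)})"
  have "rmult c (cmon C D eps) \<in> ?S" if D: "D \<subseteq> {1..n}" "even (card D) = p" for D
  proof -
    have "rmult c (cmon C D eps) = clact n sc C (clmul n (clbasis D) c) eps"
      using D by (simp flip: clact_clbasis add: rmult_clact clbasis_in_clifford)
    also have "\<dots> \<in> ?S"
    proof (rule clact_in_span)
      fix E assume E: "E \<subseteq> {1..n}" and "clmul n (clbasis D) c E \<noteq> 0"
      then have "even (card (symdiff D E)) = q" using q D by (simp add: clmul_clbasis_left)
      moreover have "finite D" "finite E"
        using D E by (auto intro: finite_subset[OF _ finite_atLeastAtMost])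
      ultimately show "even (card E) = (p = q)" using D even_card_symdiff by blast
    qed
    finally show ?thesis .
  qed
  then have "V.span (rmult c ` (\<lambda>D. cmon C D eps) ` {D\<in>Pow {1..n}. even (card D) = p}) \<subseteq> ?S"
    by (intro V.span_minimal V.subspace_span) auto
  then show ?thesis using module_hom.span_image[OF rmult_hom] by simp
qed

lemma endo_even_rmult: "c \<in> clifford n \<Longrightarrow> cl_even c \<Longrightarrow> endo_even n sc C eps (rmult c)"
  unfolding endo_even_def M_even_def M_odd_def cl_even_def
  using rmult_parity_span[of c True True] rmult_parity_span[of c True False] by simp

lemma endo_odd_rmult: "c \<in> clifford n \<Longrightarrow> cl_odd c \<Longrightarrow> endo_odd n sc C eps (rmult c)"
  unfolding endo_odd_def M_even_def M_odd_def cl_odd_def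
  using rmult_parity_span[of c False True] rmult_parity_span[of c False False] by simp

end

theorem mainTheorem10:
  fixes n :: nat and I :: "nat list"
    and sc :: "complex \<Rightarrow> 'm::ab_group_add \<Rightarrow> 'm"
    and C T :: "nat \<Rightarrow> 'm \<Rightarrow> 'm" and eps :: 'm
  assumes "is_composition I n"
    and "is_MI n I sc C T eps"
  defines "V \<equiv> valleys I n"
  shows "\<exists>F. (\<forall>c\<in>clsub n V. \<forall>x\<in>clifford n.
                 F c (clact n sc C x eps) = clact n sc C (clmul n x c) eps)
           \<and> bij_betw F (clsub n V) (hcl_endos n sc C T)
           \<and> (\<forall>c\<in>clsub n V. \<forall>c'\<in>clsub n V. F (clmul n c c') = F c' \<circ> F c)
           \<and> (\<forall>c\<in>clsub n V. \<forall>c'\<in>clsub n V. \<forall>a m.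
                 F (cladd (clscale a c) c') m = sc a (F c m) + F c' m)
           \<and> (\<forall>c\<in>clsub n V. cl_even c \<longrightarrow> endo_even n sc C eps (F c))
           \<and> (\<forall>c\<in>clsub n V. cl_odd c \<longrightarrow> endo_odd n sc C eps (F c))"
proof -
  interpret induced_module n I sc C T eps
    by (rule induced_module.intro) fact
  have "clsub n (valleys I n) \<subseteq> clifford n" by (rule clsub_subset_clifford[OF valleys_subset])
  then show ?thesis
    unfolding V_def
    using rmult_clact bij_betw_rmult[OF assms(1)] rmult_clmul rmult_cladd_clscale
      endo_even_rmult endo_odd_rmult
    by blast
qed

end
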